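(* Let $n\ge 1$ and $k\ge 1$ be integers and set $m=n+2k$. Let $L=\{x_1,\dots,x_n\}$ and $L'=\{y_1,\dots,y_m\}$ be finite sets of cells, and let there be $2k+1$ actions $u_1,\dots,u_{2k+1}$ such that applying action $u_j$ at cell $x_i$ leads to cell $y_{i+j-1}$. Define action probabilities $$p(x_i,u_1)=\frac{n-i+1}{m},\qquad p(x_i,u_j)=\frac{1}{m}\ (2\le j\le 2k),\qquad p(x_i,u_{2k+1})=\frac{i}{m}.$$ Then (1) $\sum_{j=1}^{2k+1} p(x_i,u_j)=1$ for every $i\in\{1,\dots,n\}$, and (2) if the distribution on $L$ is uniform, $p(x_i)=1/n$ for all $i$, then the induced distribution on $L'$, given by $p(y_l)=\sum_{i=1}^n\sum_{j:\, i+j-1=l} p(x_i,u_j)\,p(x_i)$, satisfies $p(y_l)=1/m$ for every $l\in\{1,\dots,m\}$.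
   Context: This models the one-dimensional system $x_{t+1}=x_t+u$ with $u\in[-1,1]$, where two consecutive reachable level sets $L$ (at time $t$) and $L'$ (at time $t+1$) are discretized into consecutive cells of equal length, $L$ having $n$ cells and $L'$ having $n+2k$ cells, and $2k+1$ uniformly spaced control inputs shift a cell by $-k,\dots,k$ cells. A level set is C-uniform if the probability distribution of the robot's state over its cells is uniform. *)

theory Defs
  imports Complex_Main
begin

definition act_prob :: "nat \<Rightarrow> nat \<Rightarrow> nat \<Rightarrow> nat \<Rightarrow> real" where
  "act_prob n k i j =
     (let m = real (n + 2 * k) in
      if j = 1 then (real n - real i + 1) / m
      else if j = 2 * k + 1 then real i / m
      else 1 / m)"

definition induced :: "nat \<Rightarrow> nat \<Rightarrow> (nat \<Rightarrow> real) \<Rightarrow> nat \<Rightarrow> real" where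
  "induced n k px l =
     (\<Sum>i\<in>{1..n}. \<Sum>j\<in>{j\<in>{1..2*k+1}. i + j - 1 = l}. act_prob n k i j * px i)"

end

theory Submission
  imports Defs
begin

text \<open>Scaled by m, the action probabilities of x_i are the integer weights n + 1 - i, 1, ..., 1, i,
which sum to m. Under the uniform distribution, m n p(y_l) is the total weight arriving at y_l:
the weight n + 1 - l from x_l, the weight l - 2k from x_{l-2k}, and 1 from each x_i with
l - 2k < i < l. These three numbers are the sizes of the pieces i \<ge> l, i \<le> l - 2k and
l - 2k < i < l of a partition of {1..n}, so they add up to n.\<close>

definition act_weight :: "nat \<Rightarrow> nat \<Rightarrow> nat \<Rightarrow> nat \<Rightarrow> nat" where
  "act_weight n k i j = (if j = 1 then n + 1 - i else if j = 2 * k + 1 then i else 1)"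

lemma act_prob_eq_act_weight:
  assumes "i \<le> n"
  shows "act_prob n k i j = real (act_weight n k i j) / real (n + 2 * k)"
  using assms by (simp add: act_prob_def act_weight_def Let_def of_nat_diff)

lemma act_weight_row_sum:
  assumes "k \<ge> 1" "i \<le> n"
  shows "(\<Sum>j\<in>{1..2*k+1}. act_weight n k i j) = n + 2 * k"
proof -
  have split: "{1..2*k+1} = insert 1 (insert (2*k+1) {2..2*k})"
    using assms(1) by auto
  have "(\<Sum>j\<in>{2..2*k}. act_weight n k i j) = 2 * k - 1"
    by (simp add: act_weight_def)
  then show ?thesis
    unfolding split using assms by (simp add: act_weight_def)
qed

lemma act_weight_landing_sum:
  assumes k: "k \<ge> 1" and i: "i \<in> {1..n}"
  shows "(\<Sum>j\<in>{j\<in>{1..2*k+1}. i + j - 1 = l}. act_weight n k i j)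
      = (if i = l then n + 1 - l else 0) + (if i + 2 * k = l then i else 0)
        + (if l < i + 2 * k \<and> i < l then 1 else 0)"
proof (cases "i \<le> l \<and> l \<le> i + 2 * k")
  case True
  then have "{j\<in>{1..2*k+1}. i + j - 1 = l} = {l + 1 - i}"
    using i by auto
  then have "(\<Sum>j\<in>{j\<in>{1..2*k+1}. i + j - 1 = l}. act_weight n k i j) = act_weight n k i (l + 1 - i)"
    by simp
  also have "\<dots> = (if i = l then n + 1 - l else 0) + (if i + 2 * k = l then i else 0)
      + (if l < i + 2 * k \<and> i < l then 1 else 0)"
    using True k unfolding act_weight_def by (cases "i = l"; cases "i + 2 * k = l") auto
  finally show ?thesis .
next
  case False
  then have "{j\<in>{1..2*k+1}. i + j - 1 = l} = {}"
    using i by auto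
  then show ?thesis
    using False by auto
qed

text \<open>The truncated differences l - 2k and n + 1 - l are the sizes of {1..l - 2k} and {l..n};
they vanish exactly when x_{l-2k}, respectively x_l, does not exist.\<close>

lemma card_partition_around:
  assumes k: "k \<ge> 1" and l: "l \<in> {1..n+2*k}"
  shows "(l - 2 * k) + card {i\<in>{1..n}. l < i + 2 * k \<and> i < l} + (n + 1 - l) = n"
proof -
  let ?B = "{i\<in>{1..n}. l < i + 2 * k \<and> i < l}"
  have cover: "{1..n} = {1..l - 2 * k} \<union> ?B \<union> {l..n}"
    using l by auto
  have "card ({1..l - 2 * k} \<union> ?B \<union> {l..n}) = card ({1..l - 2 * k} \<union> ?B) + card {l..n}"
    by (rule card_Un_disjoint) (use k in auto)
  also have "card ({1..l - 2 * k} \<union> ?B) = card {1..l - 2 * k} + card ?B"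
    by (rule card_Un_disjoint) (use k in auto)
  finally show ?thesis
    unfolding cover[symmetric] by simp
qed

lemma act_weight_column_sum:
  assumes k: "k \<ge> 1" and l: "l \<in> {1..n+2*k}"
  shows "(\<Sum>i\<in>{1..n}. \<Sum>j\<in>{j\<in>{1..2*k+1}. i + j - 1 = l}. act_weight n k i j) = n"
proof -
  have from_right: "(\<Sum>i\<in>{1..n}. if i = l then n + 1 - l else 0) = n + 1 - l"
    using l by simp
  have "(\<Sum>i\<in>{1..n}. if i + 2 * k = l then i else 0)
      = (\<Sum>i\<in>{1..n}. if i = l - 2 * k then l - 2 * k else 0)"
    by (rule sum.cong) auto
  then have from_left: "(\<Sum>i\<in>{1..n}. if i + 2 * k = l then i else 0) = l - 2 * k"
    using l by auto
  have from_middle: "(\<Sum>i\<in>{1..n}. if l < i + 2 * k \<and> i < l then 1 else 0)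
      = card {i\<in>{1..n}. l < i + 2 * k \<and> i < l}"
    by (simp flip: sum.inter_filter)
  show ?thesis
    using act_weight_landing_sum[OF k] card_partition_around[OF k l] from_right from_left from_middle
    by (simp add: sum.distrib)
qed

lemma act_prob_row_sum:
  assumes "k \<ge> 1" "i \<in> {1..n}"
  shows "(\<Sum>j\<in>{1..2*k+1}. act_prob n k i j) = 1"
proof -
  have "(\<Sum>j\<in>{1..2*k+1}. act_prob n k i j)
      = (\<Sum>j\<in>{1..2*k+1}. real (act_weight n k i j) / real (n + 2 * k))"
    using assms by (simp add: act_prob_eq_act_weight)
  also have "\<dots> = real (\<Sum>j\<in>{1..2*k+1}. act_weight n k i j) / real (n + 2 * k)"
    by (simp only: of_nat_sum sum_divide_distrib)
  also have "\<dots> = 1"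
    using assms act_weight_row_sum[of k i n] by simp
  finally show ?thesis .
qed

lemma induced_uniform:
  assumes n: "n \<ge> 1" and k: "k \<ge> 1" and l: "l \<in> {1..n+2*k}"
    and px: "\<forall>i\<in>{1..n}. px i = 1 / real n"
  shows "induced n k px l = 1 / real (n + 2 * k)"
proof -
  have "induced n k px l
      = (\<Sum>i\<in>{1..n}. \<Sum>j\<in>{j\<in>{1..2*k+1}. i + j - 1 = l}.
           real (act_weight n k i j) / (real (n + 2 * k) * real n))"
    unfolding induced_def using px by (simp add: act_prob_eq_act_weight)
  also have "\<dots> = real (\<Sum>i\<in>{1..n}. \<Sum>j\<in>{j\<in>{1..2*k+1}. i + j - 1 = l}. act_weight n k i j)
        / (real (n + 2 * k) * real n)"
    by (simp only: of_nat_sum sum_divide_distrib)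
  also have "\<dots> = 1 / real (n + 2 * k)"
    unfolding act_weight_column_sum[OF k l] using n by simp
  finally show ?thesis .
qed

theorem mainTheorem1:
  fixes n k :: nat and px :: "nat \<Rightarrow> real"
  assumes "n \<ge> 1" and "k \<ge> 1"
  shows "(\<forall>i\<in>{1..n}. (\<Sum>j\<in>{1..2*k+1}. act_prob n k i j) = 1)
       \<and> ((\<forall>i\<in>{1..n}. px i = 1 / real n) \<longrightarrow>
            (\<forall>l\<in>{1..n+2*k}. induced n k px l = 1 / real (n + 2*k)))"
  using assms act_prob_row_sum induced_uniform by blast

end
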